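(* Let $G$ be an abelian Hausdorff topological group in which every cyclic subgroup is discrete. The following are equivalent: (i) $G$ contains an infinite absolutely Cauchy summable set; (ii) $G$ contains a subgroup topologically isomorphic to $S_A$ for some infinite subset $A$ of $G\setminus\{0\}$.
   Context: For $a\in G$, $\langle a\rangle$ is the cyclic subgroup generated by $a$ with the subspace topology. For $A\subseteq G\setminus\{0\}$, $S_A=\bigoplus_{a\in A}\langle a\rangle$ is the subgroup of finitely supported elements of the product $\prod_{a\in A}\langle a\rangle$, with the subspace topology of the Tychonoff product topology. $A\subseteq G$ is absolutely Cauchy summable if for every neighbourhood $U$ of $0$ there is a finite $F\subseteq A$ such that the subgroup generated by $A\setminus F$ is contained in $U$. *)

theory Defs
  imports "HOL-Analysis.Analysis"
begin

definition is_subgroup :: "'a::ab_group_add set \<Rightarrow> bool" where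
  "is_subgroup H \<longleftrightarrow> 0 \<in> H \<and> (\<forall>x\<in>H. \<forall>y\<in>H. x + y \<in> H) \<and> (\<forall>x\<in>H. - x \<in> H)"

definition gen_subgroup :: "'a::ab_group_add set \<Rightarrow> 'a set" where
  "gen_subgroup S = \<Inter>{H. is_subgroup H \<and> S \<subseteq> H}"

definition cyclic :: "'a::ab_group_add \<Rightarrow> 'a set" where
  "cyclic a = gen_subgroup {a}"

definition discrete_subspace :: "'a::topological_space set \<Rightarrow> bool" where
  "discrete_subspace S \<longleftrightarrow> (\<forall>x\<in>S. \<exists>U. open U \<and> U \<inter> S = {x})"

definition abs_cauchy_summable :: "'a::{ab_group_add,topological_space} set \<Rightarrow> bool" where
  "abs_cauchy_summable A \<longleftrightarrow>
     (\<forall>U. (\<exists>V. open V \<and> 0 \<in> V \<and> V \<subseteq> U) \<longrightarrow>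
        (\<exists>F. finite F \<and> F \<subseteq> A \<and> gen_subgroup (A - F) \<subseteq> U))"

text \<open>Carrier of S_A: finitely supported elements of the product of the cyclic
  subgroups (as extensional functions on A).\<close>
definition SA_carrier :: "'a::ab_group_add set \<Rightarrow> ('a \<Rightarrow> 'a) set" where
  "SA_carrier A = {f \<in> PiE A cyclic. finite {a \<in> A. f a \<noteq> 0}}"

definition SA_topology :: "'a::{ab_group_add,topological_space} set \<Rightarrow> ('a \<Rightarrow> 'a) topology" where
  "SA_topology A = subtopology (product_topology (\<lambda>a. subtopology euclidean (cyclic a)) A) (SA_carrier A)"

definition SA_add :: "'a set \<Rightarrow> ('a \<Rightarrow> 'a::ab_group_add) \<Rightarrow> ('a \<Rightarrow> 'a) \<Rightarrow> ('a \<Rightarrow> 'a)" where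
  "SA_add A f g = (\<lambda>a\<in>A. f a + g a)"

definition contains_copy_of_SA :: "'a::{ab_group_add,topological_space} set \<Rightarrow> bool" where
  "contains_copy_of_SA A \<longleftrightarrow>
     (\<exists>(H::'a set) \<phi>. is_subgroup H \<and>
        homeomorphic_map (SA_topology A) (subtopology euclidean H) \<phi> \<and>
        (\<forall>f\<in>SA_carrier A. \<forall>g\<in>SA_carrier A. \<phi> (SA_add A f g) = \<phi> f + \<phi> g))"

end

theory Submission
  imports Defs
begin

text \<open>
  (ii) \<Rightarrow> (i): if \<open>\<phi>\<close> embeds \<open>S\<^sub>A\<close> into \<open>G\<close>, the images of the unit vectors
  \<open>e\<^sub>a\<close> (coordinate \<open>a\<close> at \<open>a\<close>, zero elsewhere) form an infinite absolutely Cauchy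
  summable set, because every neighbourhood of \<open>0\<close> in \<open>S\<^sub>A\<close> contains the subgroup of
  elements vanishing on some finite \<open>F \<subseteq> A\<close>.

  (i) \<Rightarrow> (ii): from an infinite absolutely Cauchy summable \<open>B\<close> choose inductively distinct
  nonzero \<open>a\<^sub>n \<in> B\<close>, neighbourhoods \<open>V\<^sub>n\<close> of \<open>0\<close> with
  \<open>(V\<^sub>n - V\<^sub>n) \<inter> \<langle>a\<^sub>n\<rangle> = {0}\<close> (discreteness of \<open>\<langle>a\<^sub>n\<rangle>\<close>), and finite sets
  \<open>E\<^sub>n\<close> containing the earlier choices such that \<open>B - E\<^bsub>n+1\<^esub>\<close> generates a
  subgroup inside \<open>V\<^sub>n\<close>. For \<open>A = {a\<^sub>n}\<close> the summation map \<open>S\<^sub>A \<rightarrow> G\<close> is a continuous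
  homomorphism by absolute Cauchy summability. Peeling off one summand at a time, an element
  of \<open>S\<^sub>A\<close> whose sum lies in \<open>V\<^sub>0 \<inter> \<dots> \<inter> V\<^sub>k\<close> has zero coordinates at
  \<open>a\<^sub>0, \<dots>, a\<^sub>k\<close>; hence the summation map is injective and each coordinate of its inverse
  is locally constant, so it is a topological isomorphism onto its image.
\<close>

lemma is_subgroup_gen_subgroup: "is_subgroup (gen_subgroup S)"
  unfolding gen_subgroup_def is_subgroup_def by auto

lemma gen_subgroup_superset: "S \<subseteq> gen_subgroup S"
  unfolding gen_subgroup_def by auto

lemma gen_subgroup_least: "is_subgroup H \<Longrightarrow> S \<subseteq> H \<Longrightarrow> gen_subgroup S \<subseteq> H"
  unfolding gen_subgroup_def by auto

lemma gen_subgroup_mono: "S \<subseteq> T \<Longrightarrow> gen_subgroup S \<subseteq> gen_subgroup T"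
  by (meson gen_subgroup_least gen_subgroup_superset is_subgroup_gen_subgroup order_trans)

lemma is_subgroup_zero: "is_subgroup H \<Longrightarrow> 0 \<in> H"
  unfolding is_subgroup_def by auto

lemma is_subgroup_add: "is_subgroup H \<Longrightarrow> x \<in> H \<Longrightarrow> y \<in> H \<Longrightarrow> x + y \<in> H"
  unfolding is_subgroup_def by auto

lemma is_subgroup_diff: "is_subgroup H \<Longrightarrow> x \<in> H \<Longrightarrow> y \<in> H \<Longrightarrow> x - y \<in> H"
  unfolding is_subgroup_def by (metis diff_conv_add_uminus)

lemma is_subgroup_sum: "is_subgroup H \<Longrightarrow> (\<And>x. x \<in> S \<Longrightarrow> f x \<in> H) \<Longrightarrow> sum f S \<in> H"
  by (induction S rule: infinite_finite_induct) (auto simp: is_subgroup_zero is_subgroup_add)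

lemma is_subgroup_cyclic: "is_subgroup (cyclic x)"
  unfolding cyclic_def by (rule is_subgroup_gen_subgroup)

lemma self_in_cyclic: "x \<in> cyclic x"
  unfolding cyclic_def using gen_subgroup_superset by blast

lemma zero_in_cyclic: "0 \<in> cyclic x"
  by (rule is_subgroup_zero[OF is_subgroup_cyclic])

lemma cyclic_subset_gen_subgroup: "x \<in> S \<Longrightarrow> cyclic x \<subseteq> gen_subgroup S"
  unfolding cyclic_def using gen_subgroup_mono by blast

lemma sum_cyclic_in_gen_subgroup:
  assumes "\<And>x. x \<in> S \<Longrightarrow> f x \<in> cyclic x" and "S \<subseteq> T"
  shows "sum f S \<in> gen_subgroup T"
  using assms cyclic_subset_gen_subgroup
  by (intro is_subgroup_sum[OF is_subgroup_gen_subgroup]) blast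

lemma abs_cauchy_summableD:
  assumes "abs_cauchy_summable A" and "open V" and "0 \<in> V"
  obtains F where "finite F" "F \<subseteq> A" "gen_subgroup (A - F) \<subseteq> V"
  using assms unfolding abs_cauchy_summable_def by blast

lemma abs_cauchy_summableI:
  assumes "\<And>V. open V \<Longrightarrow> 0 \<in> V \<Longrightarrow> \<exists>F. finite F \<and> F \<subseteq> A \<and> gen_subgroup (A - F) \<subseteq> V"
  shows "abs_cauchy_summable A"
  unfolding abs_cauchy_summable_def using assms by (meson order_trans)

lemma open_vimage_translation:
  fixes S :: "'a::topological_group_add set"
  assumes "open S"
  shows "open {y. c + y \<in> S}"
proof -
  have "continuous_on UNIV (\<lambda>y::'a. c + y)"
    by (intro continuous_intros)
  then show ?thesis
    using assms by (simp add: continuous_on_open_vimage[of UNIV, simplified] vimage_def)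
qed

lemma open_zero_nhd_diff_subset:
  fixes U :: "'a::topological_group_add set"
  assumes "open U" and "0 \<in> U"
  obtains V where "open V" "0 \<in> V" "\<And>x y. x \<in> V \<Longrightarrow> y \<in> V \<Longrightarrow> x - y \<in> U"
proof -
  let ?d = "\<lambda>p::'a \<times> 'a. fst p - snd p"
  have "open (?d -` U)"
    using assms(1) continuous_on_open_vimage[of UNIV ?d]
    by (simp add: continuous_on_diff continuous_on_fst continuous_on_snd continuous_on_id)
  moreover have "(0, 0) \<in> ?d -` U"
    using assms(2) by simp
  ultimately obtain P Q where "open P" "open Q" "(0, 0) \<in> P \<times> Q" "P \<times> Q \<subseteq> ?d -` U"
    by (rule open_prod_elim)
  then show thesis
    by (intro that[of "P \<inter> Q"]) auto
qed

lemma continuous_map_to_euclideanI: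
  assumes "\<And>x U. x \<in> topspace X \<Longrightarrow> open U \<Longrightarrow> f x \<in> U \<Longrightarrow>
             \<exists>N. openin X N \<and> x \<in> N \<and> (\<forall>y\<in>N. f y \<in> U)"
  shows "continuous_map X euclidean f"
  unfolding continuous_map_def
proof (intro conjI allI impI)
  fix U :: "'b set"
  assume "openin euclidean U"
  then have "open U" by simp
  show "openin X {x \<in> topspace X. f x \<in> U}"
  proof (subst openin_subopen, intro ballI)
    fix x assume "x \<in> {x \<in> topspace X. f x \<in> U}"
    with assms \<open>open U\<close> obtain N where "openin X N" "x \<in> N" "\<forall>y\<in>N. f y \<in> U"
      by blast
    then show "\<exists>T. openin X T \<and> x \<in> T \<and> T \<subseteq> {x \<in> topspace X. f x \<in> U}"
      using openin_subset by blast
  qed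
qed simp

definition SA_sum :: "'a::ab_group_add set \<Rightarrow> ('a \<Rightarrow> 'a) \<Rightarrow> 'a" where
  "SA_sum A f = sum f {x\<in>A. f x \<noteq> 0}"

definition SA_zero :: "'a::ab_group_add set \<Rightarrow> 'a \<Rightarrow> 'a" where
  "SA_zero A = (\<lambda>x\<in>A. 0)"

definition SA_diff :: "'a set \<Rightarrow> ('a \<Rightarrow> 'a::ab_group_add) \<Rightarrow> ('a \<Rightarrow> 'a) \<Rightarrow> 'a \<Rightarrow> 'a" where
  "SA_diff A f g = (\<lambda>x\<in>A. f x - g x)"

definition SA_unit :: "'a::ab_group_add set \<Rightarrow> 'a \<Rightarrow> 'a \<Rightarrow> 'a" where
  "SA_unit A a = (\<lambda>x\<in>A. if x = a then a else 0)"

definition SA_vanishing :: "'a::ab_group_add set \<Rightarrow> 'a set \<Rightarrow> ('a \<Rightarrow> 'a) set" where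
  "SA_vanishing A F = {f \<in> SA_carrier A. \<forall>x\<in>F. f x = 0}"

lemma SA_carrier_finite_support: "f \<in> SA_carrier A \<Longrightarrow> finite {x\<in>A. f x \<noteq> 0}"
  unfolding SA_carrier_def by auto

lemma SA_carrier_in_cyclic: "f \<in> SA_carrier A \<Longrightarrow> x \<in> A \<Longrightarrow> f x \<in> cyclic x"
  unfolding SA_carrier_def by auto

lemma SA_carrier_extensional: "f \<in> SA_carrier A \<Longrightarrow> f \<in> extensional A"
  unfolding SA_carrier_def by (auto simp: PiE_iff)

lemma SA_carrierI:
  "(\<And>x. x \<in> A \<Longrightarrow> f x \<in> cyclic x) \<Longrightarrow> f \<in> extensional A \<Longrightarrow> finite {x\<in>A. f x \<noteq> 0}
   \<Longrightarrow> f \<in> SA_carrier A"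
  unfolding SA_carrier_def by (auto simp: PiE_iff)

lemma topspace_SA_topology [simp]: "topspace (SA_topology A) = SA_carrier A"
  unfolding SA_topology_def SA_carrier_def by auto

lemma SA_sum_eq:
  assumes "finite S" "{x\<in>A. f x \<noteq> 0} \<subseteq> S" "S \<subseteq> A"
  shows "SA_sum A f = sum f S"
  unfolding SA_sum_def using assms by (intro sum.mono_neutral_left) auto

lemma SA_zero_in_carrier: "SA_zero A \<in> SA_carrier A"
  unfolding SA_zero_def by (rule SA_carrierI) (auto simp: zero_in_cyclic)

lemma SA_add_in_carrier:
  assumes f: "f \<in> SA_carrier A" and g: "g \<in> SA_carrier A"
  shows "SA_add A f g \<in> SA_carrier A"
proof (rule SA_carrierI)
  show "SA_add A f g x \<in> cyclic x" if "x \<in> A" for x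
    using that SA_carrier_in_cyclic[OF f] SA_carrier_in_cyclic[OF g]
    by (simp add: SA_add_def is_subgroup_add[OF is_subgroup_cyclic])
  have "{x\<in>A. SA_add A f g x \<noteq> 0} \<subseteq> {x\<in>A. f x \<noteq> 0} \<union> {x\<in>A. g x \<noteq> 0}"
    by (auto simp: SA_add_def)
  then show "finite {x\<in>A. SA_add A f g x \<noteq> 0}"
    using SA_carrier_finite_support[OF f] SA_carrier_finite_support[OF g] finite_subset by blast
qed (simp add: SA_add_def)

lemma SA_diff_in_carrier:
  assumes f: "f \<in> SA_carrier A" and g: "g \<in> SA_carrier A"
  shows "SA_diff A f g \<in> SA_carrier A"
proof (rule SA_carrierI)
  show "SA_diff A f g x \<in> cyclic x" if "x \<in> A" for x
    using that SA_carrier_in_cyclic[OF f] SA_carrier_in_cyclic[OF g]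
    by (simp add: SA_diff_def is_subgroup_diff[OF is_subgroup_cyclic])
  have "{x\<in>A. SA_diff A f g x \<noteq> 0} \<subseteq> {x\<in>A. f x \<noteq> 0} \<union> {x\<in>A. g x \<noteq> 0}"
    by (auto simp: SA_diff_def)
  then show "finite {x\<in>A. SA_diff A f g x \<noteq> 0}"
    using SA_carrier_finite_support[OF f] SA_carrier_finite_support[OF g] finite_subset by blast
qed (simp add: SA_diff_def)

lemma SA_unit_in_carrier: "a \<in> A \<Longrightarrow> SA_unit A a \<in> SA_carrier A"
  unfolding SA_unit_def by (rule SA_carrierI) (auto simp: self_in_cyclic zero_in_cyclic)

lemma SA_sum_add:
  assumes f: "f \<in> SA_carrier A" and g: "g \<in> SA_carrier A"
  shows "SA_sum A (SA_add A f g) = SA_sum A f + SA_sum A g"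
proof -
  define S where "S = {x\<in>A. f x \<noteq> 0} \<union> {x\<in>A. g x \<noteq> 0}"
  have S: "finite S" "S \<subseteq> A"
    using SA_carrier_finite_support[OF f] SA_carrier_finite_support[OF g] by (auto simp: S_def)
  have "SA_sum A (SA_add A f g) = (\<Sum>x\<in>S. f x + g x)"
    using S by (subst SA_sum_eq[OF S(1)]) (auto simp: S_def SA_add_def intro!: sum.cong)
  also have "\<dots> = SA_sum A f + SA_sum A g"
    using S by (simp add: sum.distrib SA_sum_eq[OF S(1) _ S(2)] S_def)
  finally show ?thesis .
qed

lemma SA_sum_diff:
  assumes f: "f \<in> SA_carrier A" and g: "g \<in> SA_carrier A"
  shows "SA_sum A (SA_diff A f g) = SA_sum A f - SA_sum A g"
proof -
  define S where "S = {x\<in>A. f x \<noteq> 0} \<union> {x\<in>A. g x \<noteq> 0}"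
  have S: "finite S" "S \<subseteq> A"
    using SA_carrier_finite_support[OF f] SA_carrier_finite_support[OF g] by (auto simp: S_def)
  have "SA_sum A (SA_diff A f g) = (\<Sum>x\<in>S. f x - g x)"
    using S by (subst SA_sum_eq[OF S(1)]) (auto simp: S_def SA_diff_def intro!: sum.cong)
  also have "\<dots> = SA_sum A f - SA_sum A g"
    using S by (simp add: sum_subtractf SA_sum_eq[OF S(1) _ S(2)] S_def)
  finally show ?thesis .
qed

lemma SA_hom_zero:
  assumes "\<forall>f\<in>SA_carrier A. \<forall>g\<in>SA_carrier A. \<psi> (SA_add A f g) = \<psi> f + \<psi> g"
  shows "\<psi> (SA_zero A) = (0::'b::group_add)"
proof -
  have "SA_add A (SA_zero A) (SA_zero A) = SA_zero A"
    by (auto simp: SA_add_def SA_zero_def)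
  then have "\<psi> (SA_zero A) = \<psi> (SA_zero A) + \<psi> (SA_zero A)"
    using assms SA_zero_in_carrier by metis
  then show ?thesis
    by (metis add.right_neutral add_left_cancel)
qed

lemma is_subgroup_image_SA_vanishing:
  assumes hom: "\<forall>f\<in>SA_carrier A. \<forall>g\<in>SA_carrier A. \<psi> (SA_add A f g) = \<psi> f + \<psi> g"
    and "F \<subseteq> A"
  shows "is_subgroup (\<psi> ` SA_vanishing A F)"
  unfolding is_subgroup_def
proof (intro conjI ballI)
  have "SA_zero A \<in> SA_vanishing A F"
    using SA_zero_in_carrier \<open>F \<subseteq> A\<close> by (auto simp: SA_vanishing_def SA_zero_def)
  then show "0 \<in> \<psi> ` SA_vanishing A F"
    using SA_hom_zero[OF hom] by (metis image_eqI)
next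
  fix x y assume "x \<in> \<psi> ` SA_vanishing A F" "y \<in> \<psi> ` SA_vanishing A F"
  then obtain f g where "f \<in> SA_vanishing A F" "g \<in> SA_vanishing A F" "x = \<psi> f" "y = \<psi> g"
    by blast
  moreover from this have "SA_add A f g \<in> SA_vanishing A F"
    using \<open>F \<subseteq> A\<close> SA_add_in_carrier[of f A g]
    by (auto simp: SA_vanishing_def) (auto simp: SA_add_def)
  moreover have "\<psi> (SA_add A f g) = x + y"
    using hom calculation by (simp add: SA_vanishing_def)
  ultimately show "x + y \<in> \<psi> ` SA_vanishing A F"
    by (metis image_eqI)
next
  fix x assume "x \<in> \<psi> ` SA_vanishing A F"
  then obtain f where f: "f \<in> SA_vanishing A F" "x = \<psi> f"
    by blast
  define g where "g = SA_diff A (SA_zero A) f"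
  have fC: "f \<in> SA_carrier A" and gC: "g \<in> SA_carrier A"
    using f SA_zero_in_carrier SA_diff_in_carrier by (auto simp: SA_vanishing_def g_def)
  have "SA_add A f g = SA_zero A"
    by (auto simp: SA_add_def SA_zero_def SA_diff_def g_def)
  then have "\<psi> f + \<psi> g = 0"
    using hom fC gC SA_hom_zero[OF hom] by metis
  then have "\<psi> g = - x"
    using f(2) by (simp add: eq_neg_iff_add_eq_0 add.commute)
  moreover have "g \<in> SA_vanishing A F"
    using f gC \<open>F \<subseteq> A\<close> by (auto simp: SA_vanishing_def g_def SA_diff_def SA_zero_def)
  ultimately show "- x \<in> \<psi> ` SA_vanishing A F"
    by (metis image_eqI)
qed

lemma SA_topology_zero_nhd_contains_vanishing:
  assumes "openin (SA_topology A) T" and "SA_zero A \<in> T"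
  obtains F where "finite F" "F \<subseteq> A" "SA_vanishing A F \<subseteq> T"
proof -
  obtain T' where T': "openin (product_topology (\<lambda>a. top_of_set (cyclic a)) A) T'"
    "T = T' \<inter> SA_carrier A"
    using assms(1) unfolding SA_topology_def openin_subtopology by blast
  then have "SA_zero A \<in> T'"
    using assms(2) by blast
  from product_topology_open_contains_basis[OF T'(1) this]
  obtain X where X: "SA_zero A \<in> Pi\<^sub>E A X" "finite {i. X i \<noteq> topspace (top_of_set (cyclic i))}"
    "Pi\<^sub>E A X \<subseteq> T'"
    by blast
  define F where "F = {i \<in> A. X i \<noteq> cyclic i}"
  have "SA_vanishing A F \<subseteq> Pi\<^sub>E A X"
  proof
    fix f assume f: "f \<in> SA_vanishing A F"
    have "f i \<in> X i" if "i \<in> A" for i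
    proof (cases "i \<in> F")
      case True
      then have "f i = 0"
        using f by (simp add: SA_vanishing_def)
      moreover have "SA_zero A i \<in> X i"
        using X(1) that by (rule PiE_mem)
      ultimately show ?thesis
        using that by (simp add: SA_zero_def)
    next
      case False
      then show ?thesis
        using f that SA_carrier_in_cyclic by (auto simp: F_def SA_vanishing_def)
    qed
    then show "f \<in> Pi\<^sub>E A X"
      using f SA_carrier_extensional by (auto simp: SA_vanishing_def PiE_iff)
  qed
  then have "SA_vanishing A F \<subseteq> T"
    using X(3) T'(2) by (auto simp: SA_vanishing_def)
  moreover have "finite F"
    using X(2) by (rule rev_finite_subset) (auto simp: F_def)
  ultimately show thesis
    using that[of F] by (auto simp: F_def)
qed

lemma openin_SA_topology_agree_on_finite:
  fixes A :: "'a::{ab_group_add, topological_space} set"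
  assumes disc: "\<forall>x::'a. discrete_subspace (cyclic x)"
    and "finite F" and f0: "f0 \<in> SA_carrier A"
  shows "openin (SA_topology A) {f \<in> SA_carrier A. \<forall>x\<in>A \<inter> F. f x = f0 x}"
proof -
  define X where "X i = (if i \<in> A \<inter> F then {f0 i} else cyclic i)" for i
  have "openin (top_of_set (cyclic i)) (X i)" for i
  proof (cases "i \<in> A \<inter> F")
    case True
    then have "f0 i \<in> cyclic i"
      using SA_carrier_in_cyclic[OF f0] by blast
    then obtain U where "open U" "U \<inter> cyclic i = {f0 i}"
      using disc unfolding discrete_subspace_def by blast
    then show ?thesis
      using True unfolding openin_open X_def by (intro exI[of _ U]) auto
  qed (auto simp: X_def)
  moreover have "finite {i. X i \<noteq> topspace (top_of_set (cyclic i))}"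
    using \<open>finite F\<close> by (rule rev_finite_subset) (auto simp: X_def)
  ultimately have "openin (product_topology (\<lambda>i. top_of_set (cyclic i)) A) (Pi\<^sub>E A X)"
    by (rule product_topology_basis)
  moreover have "{f \<in> SA_carrier A. \<forall>x\<in>A \<inter> F. f x = f0 x} = Pi\<^sub>E A X \<inter> SA_carrier A"
  proof (intro set_eqI iffI)
    fix f assume f: "f \<in> {f \<in> SA_carrier A. \<forall>x\<in>A \<inter> F. f x = f0 x}"
    then have "f x \<in> X x" if "x \<in> A" for x
      using that SA_carrier_in_cyclic[of f A x] by (simp add: X_def)
    then show "f \<in> Pi\<^sub>E A X \<inter> SA_carrier A"
      using f SA_carrier_extensional[of f A] by (simp add: PiE_iff)
  next
    fix f assume f: "f \<in> Pi\<^sub>E A X \<inter> SA_carrier A"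
    have "f x = f0 x" if "x \<in> A \<inter> F" for x
      using PiE_mem[of f A X x] f that by (simp add: X_def)
    then show "f \<in> {f \<in> SA_carrier A. \<forall>x\<in>A \<inter> F. f x = f0 x}"
      using f by blast
  qed
  ultimately show ?thesis
    unfolding SA_topology_def openin_subtopology by blast
qed

lemma continuous_map_SA_sum:
  fixes B :: "'a::{ab_group_add, topological_group_add} set"
  assumes disc: "\<forall>x::'a. discrete_subspace (cyclic x)"
    and acs: "abs_cauchy_summable B" and "A \<subseteq> B"
  shows "continuous_map (SA_topology A) euclidean (SA_sum A)"
proof (rule continuous_map_to_euclideanI)
  fix f0 U assume "f0 \<in> topspace (SA_topology A)" "open U" "SA_sum A f0 \<in> U"
  then have f0: "f0 \<in> SA_carrier A"
    by simp
  have "open {y. SA_sum A f0 + y \<in> U}" "0 \<in> {y. SA_sum A f0 + y \<in> U}"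
    using \<open>open U\<close> \<open>SA_sum A f0 \<in> U\<close> by (simp_all add: open_vimage_translation)
  with acs obtain F where F: "finite F" "gen_subgroup (B - F) \<subseteq> {y. SA_sum A f0 + y \<in> U}"
    by (rule abs_cauchy_summableD)
  define N where "N = {f \<in> SA_carrier A. \<forall>x\<in>A \<inter> F. f x = f0 x}"
  have "SA_sum A f \<in> U" if "f \<in> N" for f
  proof -
    have f: "f \<in> SA_carrier A"
      using that by (simp add: N_def)
    have "{x\<in>A. SA_diff A f f0 x \<noteq> 0} \<subseteq> B - F"
      using that \<open>A \<subseteq> B\<close> by (auto simp: N_def SA_diff_def)
    then have "SA_sum A (SA_diff A f f0) \<in> gen_subgroup (B - F)"
      unfolding SA_sum_def using SA_carrier_in_cyclic[OF SA_diff_in_carrier[OF f f0]]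
      by (intro sum_cyclic_in_gen_subgroup) auto
    then have "SA_sum A f0 + (SA_sum A f - SA_sum A f0) \<in> U"
      using F(2) SA_sum_diff[OF f f0] by auto
    then show ?thesis
      by simp
  qed
  moreover have "openin (SA_topology A) N"
    unfolding N_def by (rule openin_SA_topology_agree_on_finite[OF disc F(1) f0])
  moreover have "f0 \<in> N"
    using f0 by (simp add: N_def)
  ultimately show "\<exists>N. openin (SA_topology A) N \<and> f0 \<in> N \<and> (\<forall>f\<in>N. SA_sum A f \<in> U)"
    by blast
qed

lemma inj_on_SA_unit:
  assumes "0 \<notin> A"
  shows "inj_on (SA_unit A) A"
proof (rule inj_onI)
  fix a b assume "a \<in> A" "b \<in> A" "SA_unit A a = SA_unit A b"
  then have "SA_unit A a a = SA_unit A b a"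
    by simp
  with \<open>a \<in> A\<close> assms show "a = b"
    by (auto simp: SA_unit_def split: if_splits)
qed

lemma ex_infinite_abs_cauchy_summable_if_contains_copy_of_SA:
  fixes A :: "'a::{ab_group_add, topological_group_add} set"
  assumes "infinite A" and "0 \<notin> A" and "contains_copy_of_SA A"
  shows "\<exists>B::'a set. infinite B \<and> abs_cauchy_summable B"
proof -
  obtain H :: "'a set" and \<psi> where H: "is_subgroup H"
    and homeo: "homeomorphic_map (SA_topology A) (top_of_set H) \<psi>"
    and hom: "\<forall>f\<in>SA_carrier A. \<forall>g\<in>SA_carrier A. \<psi> (SA_add A f g) = \<psi> f + \<psi> g"
    using assms(3) unfolding contains_copy_of_SA_def by blast
  define e where "e = \<psi> \<circ> SA_unit A"
  have "inj_on \<psi> (SA_unit A ` A)"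
    using homeomorphic_imp_injective_map[OF homeo] SA_unit_in_carrier
    by (auto intro: inj_on_subset)
  then have "inj_on e A"
    unfolding e_def using inj_on_SA_unit[OF assms(2)] by (rule comp_inj_on[rotated])
  then have "infinite (e ` A)"
    using assms(1) finite_imageD by blast
  moreover have "abs_cauchy_summable (e ` A)"
  proof (rule abs_cauchy_summableI)
    fix V :: "'a set" assume "open V" "0 \<in> V"
    have "openin (top_of_set H) (H \<inter> V)"
      using \<open>open V\<close> by (rule openin_open_Int)
    then have "openin (SA_topology A) {f \<in> topspace (SA_topology A). \<psi> f \<in> H \<inter> V}"
      by (rule openin_continuous_map_preimage[OF homeomorphic_imp_continuous_map[OF homeo]])
    then have "openin (SA_topology A) {f \<in> SA_carrier A. \<psi> f \<in> H \<inter> V}"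
      by (simp only: topspace_SA_topology)
    moreover have "SA_zero A \<in> {f \<in> SA_carrier A. \<psi> f \<in> H \<inter> V}"
      using SA_hom_zero[OF hom] \<open>0 \<in> V\<close> is_subgroup_zero[OF H] SA_zero_in_carrier by simp
    ultimately obtain F where F: "finite F" "F \<subseteq> A"
      "SA_vanishing A F \<subseteq> {f \<in> SA_carrier A. \<psi> f \<in> H \<inter> V}"
      by (rule SA_topology_zero_nhd_contains_vanishing)
    have "SA_unit A a \<in> SA_vanishing A F" if "a \<in> A - F" for a
      using that F(2) SA_unit_in_carrier by (auto simp: SA_vanishing_def SA_unit_def)
    then have "e ` A - e ` F \<subseteq> \<psi> ` SA_vanishing A F"
      unfolding e_def by auto
    then have "gen_subgroup (e ` A - e ` F) \<subseteq> V"
      using gen_subgroup_least[OF is_subgroup_image_SA_vanishing[OF hom F(2)]] F(3) by blast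
    then show "\<exists>F'. finite F' \<and> F' \<subseteq> e ` A \<and> gen_subgroup (e ` A - F') \<subseteq> V"
      using F by (intro exI[of _ "e ` F"]) auto
  qed
  ultimately show ?thesis
    by blast
qed

text \<open>The condition on \<open>y\<close> and \<open>t\<close> says \<open>(W - W) \<inter> cyclic x = {0}\<close>.\<close>

lemma exists_separated_element:
  fixes B :: "'a::{ab_group_add, topological_group_add} set"
  assumes disc: "\<forall>x::'a. discrete_subspace (cyclic x)"
    and "infinite B" and acs: "abs_cauchy_summable B" and "finite E"
  obtains x W E' where "x \<in> B - E" "x \<noteq> 0" "open W" "0 \<in> W"
    "\<And>y t. y \<in> cyclic x \<Longrightarrow> t \<in> W \<Longrightarrow> y + t \<in> W \<Longrightarrow> y = 0"
    "finite E'" "insert x E \<subseteq> E'" "gen_subgroup (B - E') \<subseteq> W"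
proof -
  have "infinite (B - insert 0 E)"
    using \<open>infinite B\<close> \<open>finite E\<close> by simp
  then obtain x where x: "x \<in> B - insert 0 E"
    using infinite_imp_nonempty by blast
  obtain U where U: "open U" "U \<inter> cyclic x = {0}"
    using disc zero_in_cyclic unfolding discrete_subspace_def by blast
  then obtain W where W: "open W" "0 \<in> W" "\<And>p q. p \<in> W \<Longrightarrow> q \<in> W \<Longrightarrow> p - q \<in> U"
    using open_zero_nhd_diff_subset[of U] by blast
  from acs W(1,2) obtain F where F: "finite F" "gen_subgroup (B - F) \<subseteq> W"
    by (rule abs_cauchy_summableD)
  show thesis
  proof (rule that[of x W "insert x (E \<union> F)"])
    show "y = 0" if "y \<in> cyclic x" "t \<in> W" "y + t \<in> W" for y t
    proof -
      have "(y + t) - t \<in> U"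
        using W(3) that(2,3) by blast
      then show ?thesis
        using that(1) U(2) by auto
    qed
    have "gen_subgroup (B - insert x (E \<union> F)) \<subseteq> gen_subgroup (B - F)"
      by (rule gen_subgroup_mono) blast
    then show "gen_subgroup (B - insert x (E \<union> F)) \<subseteq> W"
      using F(2) by blast
  qed (use x W F \<open>finite E\<close> in auto)
qed

locale separating_sequence =
  fixes B :: "'a::{ab_group_add, topological_group_add} set"
    and E :: "nat \<Rightarrow> 'a set" and a :: "nat \<Rightarrow> 'a" and V :: "nat \<Rightarrow> 'a set"
  assumes a_in_B: "a n \<in> B"
    and a_notin_E: "a n \<notin> E n"
    and a_nonzero: "a n \<noteq> 0"
    and insert_a_E_subset: "insert (a n) (E n) \<subseteq> E (Suc n)"
    and open_V: "open (V n)"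
    and zero_in_V: "0 \<in> V n"
    and gen_subgroup_tail_subset_V: "gen_subgroup (B - E (Suc n)) \<subseteq> V n"
    and cyclic_separated: "y \<in> cyclic (a n) \<Longrightarrow> t \<in> V n \<Longrightarrow> y + t \<in> V n \<Longrightarrow> y = 0"
begin

lemma E_mono: "m \<le> n \<Longrightarrow> E m \<subseteq> E n"
  by (rule lift_Suc_mono_le[of E]) (use insert_a_E_subset in blast)

lemma a_in_E: "m < n \<Longrightarrow> a m \<in> E n"
  using insert_a_E_subset[of m] E_mono[of "Suc m" n] by auto

lemma a_notin_E_le: "n \<le> k \<Longrightarrow> a k \<notin> E n"
  using E_mono[of n k] a_notin_E[of k] by blast

lemma inj_a: "inj a"
proof (rule injI)
  show "m = n" if "a m = a n" for m n
    using that a_in_E[of m n] a_in_E[of n m] a_notin_E[of m] a_notin_E[of n]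
    by (cases m n rule: linorder_cases) auto
qed

lemma cyclic_a_subset_gen_subgroup: "cyclic (a n) \<subseteq> gen_subgroup (B - E n)"
  using a_in_B a_notin_E by (intro cyclic_subset_gen_subgroup) blast

lemma components_vanish_if_sum_in_V:
  assumes "\<And>j. j < n \<Longrightarrow> g j \<in> cyclic (a j)"
    and "t \<in> gen_subgroup (B - E n)"
    and "(\<Sum>j<n. g j) + t \<in> (\<Inter>k<n. V k)"
  shows "\<forall>j<n. g j = 0"
  using assms
proof (induction n arbitrary: t)
  case 0
  then show ?case
    by simp
next
  case (Suc n)
  have "gen_subgroup (B - E (Suc n)) \<subseteq> gen_subgroup (B - E n)"
    using E_mono[of n "Suc n"] by (intro gen_subgroup_mono) auto
  then have t: "t \<in> gen_subgroup (B - E n)"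
    using Suc.prems(2) by blast
  have gn: "g n \<in> cyclic (a n)"
    using Suc.prems(1) by simp
  have split: "(\<Sum>j<Suc n. g j) + t = (\<Sum>j<n. g j) + (g n + t)"
    by (simp add: add.assoc)
  have "g n + t \<in> gen_subgroup (B - E n)"
    using gn t cyclic_a_subset_gen_subgroup[of n] is_subgroup_add[OF is_subgroup_gen_subgroup] by blast
  moreover have "(\<Sum>j<n. g j) + (g n + t) \<in> (\<Inter>k<n. V k)"
    using Suc.prems(3) unfolding split by auto
  ultimately have lower: "\<forall>j<n. g j = 0"
    using Suc.prems(1) by (intro Suc.IH[of "g n + t"]) auto
  then have "g n + t \<in> V n"
    using Suc.prems(3) by simp
  moreover have "t \<in> V n"
    using Suc.prems(2) gen_subgroup_tail_subset_V by blast
  ultimately have "g n = 0"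
    using cyclic_separated[OF gn] by blast
  with lower show ?case
    by (auto simp: less_Suc_eq)
qed

lemma SA_sum_in_V_imp_coordinate_zero:
  assumes f: "f \<in> SA_carrier (range a)" and "SA_sum (range a) f \<in> (\<Inter>k<Suc i. V k)"
  shows "f (a i) = 0"
proof -
  define I where "I = a ` {..<Suc i}"
  define S where "S = {x \<in> range a. f x \<noteq> 0} \<union> I"
  have S: "finite S" "S \<subseteq> range a" "I \<subseteq> S"
    using SA_carrier_finite_support[OF f] by (auto simp: S_def I_def)
  have "SA_sum (range a) f = sum f (S - I) + sum f I"
    using S by (simp add: SA_sum_eq[OF S(1) _ S(2)] S_def sum.subset_diff)
  also have "sum f I = (\<Sum>j<Suc i. f (a j))"
    unfolding I_def using inj_a by (simp add: sum.reindex inj_on_subset)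
  finally have split: "SA_sum (range a) f = (\<Sum>j<Suc i. f (a j)) + sum f (S - I)"
    by (simp add: add.commute)
  have "sum f (S - I) \<in> gen_subgroup (B - E (Suc i))"
  proof (rule sum_cyclic_in_gen_subgroup)
    show "f x \<in> cyclic x" if "x \<in> S - I" for x
      using that S(2) SA_carrier_in_cyclic[OF f] by blast
    show "S - I \<subseteq> B - E (Suc i)"
    proof
      fix x assume x: "x \<in> S - I"
      then obtain k where k: "x = a k"
        using S(2) by blast
      with x have "Suc i \<le> k"
        by (auto simp: I_def)
      with k show "x \<in> B - E (Suc i)"
        using a_in_B a_notin_E_le by blast
    qed
  qed
  then have "\<forall>j<Suc i. f (a j) = 0"
    using assms(2) SA_carrier_in_cyclic[OF f] unfolding split
    by (intro components_vanish_if_sum_in_V) auto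
  then show ?thesis
    by simp
qed

lemma coordinate_eq_if_SA_sum_diff_in_V:
  assumes f: "f \<in> SA_carrier (range a)" and h: "h \<in> SA_carrier (range a)"
    and "SA_sum (range a) f - SA_sum (range a) h \<in> (\<Inter>k<Suc i. V k)"
  shows "f (a i) = h (a i)"
proof -
  have "SA_diff (range a) f h (a i) = 0"
    using assms(3) SA_sum_diff[OF f h] SA_diff_in_carrier[OF f h]
    by (intro SA_sum_in_V_imp_coordinate_zero) simp_all
  then show ?thesis
    by (simp add: SA_diff_def)
qed

lemma inj_on_SA_sum: "inj_on (SA_sum (range a)) (SA_carrier (range a))"
proof (rule inj_onI)
  fix f h assume f: "f \<in> SA_carrier (range a)" and h: "h \<in> SA_carrier (range a)"
    and "SA_sum (range a) f = SA_sum (range a) h"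
  then have "f (a i) = h (a i)" for i
    using zero_in_V by (intro coordinate_eq_if_SA_sum_diff_in_V) auto
  then show "f = h"
    using SA_carrier_extensional[OF f] SA_carrier_extensional[OF h]
    by (auto intro: extensionalityI)
qed

lemma continuous_map_inv_SA_sum:
  "continuous_map (top_of_set (SA_sum (range a) ` SA_carrier (range a))) (SA_topology (range a))
     (inv_into (SA_carrier (range a)) (SA_sum (range a)))"
proof -
  define H where "H = SA_sum (range a) ` SA_carrier (range a)"
  define g where "g = inv_into (SA_carrier (range a)) (SA_sum (range a))"
  have g_in: "g y \<in> SA_carrier (range a)" if "y \<in> H" for y
    using that unfolding g_def H_def by (rule inv_into_into)
  have sum_g: "SA_sum (range a) (g y) = y" if "y \<in> H" for y
    using that unfolding g_def H_def by (rule f_inv_into_f)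
  have "continuous_map (top_of_set H) euclidean (\<lambda>y. g y (a k))" for k
  proof (rule continuous_map_to_euclideanI)
    fix y0 U assume "y0 \<in> topspace (top_of_set H)" "open U" "g y0 (a k) \<in> U"
    then have y0: "y0 \<in> H"
      by simp
    define W where "W = (\<Inter>j<Suc k. V j)"
    have "open W"
      unfolding W_def using open_V by (intro open_INT) auto
    define N where "N = H \<inter> {y. - y0 + y \<in> W}"
    have "openin (top_of_set H) N"
      unfolding N_def using \<open>open W\<close> by (intro openin_open_Int open_vimage_translation)
    moreover have "y0 \<in> N"
      using y0 zero_in_V by (simp add: N_def W_def)
    moreover have "g y (a k) = g y0 (a k)" if "y \<in> N" for y
      using that y0 g_in sum_g
      by (intro coordinate_eq_if_SA_sum_diff_in_V) (auto simp: N_def W_def)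
    ultimately show "\<exists>N. openin (top_of_set H) N \<and> y0 \<in> N \<and> (\<forall>y\<in>N. g y (a k) \<in> U)"
      using \<open>g y0 (a k) \<in> U\<close> by metis
  qed
  moreover have "g y i \<in> cyclic i" if "i \<in> range a" "y \<in> H" for i y
    using SA_carrier_in_cyclic[OF g_in[OF that(2)] that(1)] .
  ultimately have "continuous_map (top_of_set H) (top_of_set (cyclic i)) (\<lambda>y. g y i)"
    if "i \<in> range a" for i
    using that by (auto simp: continuous_map_in_subtopology)
  moreover have "g y i = undefined" if "i \<notin> range a" "y \<in> H" for i y
    using that g_in SA_carrier_extensional by (meson extensional_arb)
  ultimately have "continuous_map (top_of_set H) (product_topology (\<lambda>i. top_of_set (cyclic i)) (range a)) g"
    by (intro continuous_map_coordinatewise_then_product) auto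
  then show ?thesis
    using g_in unfolding SA_topology_def continuous_map_in_subtopology H_def g_def by auto
qed

lemma contains_copy_of_SA_range:
  assumes "\<forall>x::'a. discrete_subspace (cyclic x)" and "abs_cauchy_summable B"
  shows "contains_copy_of_SA (range a)"
  unfolding contains_copy_of_SA_def
proof (intro exI[of _ "SA_sum (range a) ` SA_carrier (range a)"] exI[of _ "SA_sum (range a)"] conjI)
  show hom: "\<forall>f\<in>SA_carrier (range a). \<forall>g\<in>SA_carrier (range a).
      SA_sum (range a) (SA_add (range a) f g) = SA_sum (range a) f + SA_sum (range a) g"
    by (simp add: SA_sum_add)
  show "is_subgroup (SA_sum (range a) ` SA_carrier (range a))"
    using is_subgroup_image_SA_vanishing[OF hom, of "{}"] by (simp add: SA_vanishing_def)
  have "continuous_map (SA_topology (range a)) euclidean (SA_sum (range a))"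
    using assms a_in_B by (intro continuous_map_SA_sum) auto
  then have "continuous_map (SA_topology (range a)) (top_of_set (SA_sum (range a) ` SA_carrier (range a)))
      (SA_sum (range a))"
    by (simp add: continuous_map_in_subtopology)
  moreover have "inv_into (SA_carrier (range a)) (SA_sum (range a)) (SA_sum (range a) f) = f"
    if "f \<in> SA_carrier (range a)" for f
    using inj_on_SA_sum that by (rule inv_into_f_f)
  moreover have "SA_sum (range a) (inv_into (SA_carrier (range a)) (SA_sum (range a)) y) = y"
    if "y \<in> SA_sum (range a) ` SA_carrier (range a)" for y
    using that by (rule f_inv_into_f)
  ultimately show "homeomorphic_map (SA_topology (range a))
      (top_of_set (SA_sum (range a) ` SA_carrier (range a))) (SA_sum (range a))"
    unfolding homeomorphic_map_maps homeomorphic_maps_def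
    using continuous_map_inv_SA_sum
    by (intro exI[of _ "inv_into (SA_carrier (range a)) (SA_sum (range a))"]) simp
qed

end

lemma ex_contains_copy_of_SA_if_abs_cauchy_summable:
  fixes B :: "'a::{ab_group_add, topological_group_add} set"
  assumes disc: "\<forall>x::'a. discrete_subspace (cyclic x)"
    and "infinite B" and acs: "abs_cauchy_summable B"
  shows "\<exists>A::'a set. infinite A \<and> 0 \<notin> A \<and> contains_copy_of_SA A"
proof -
  define P where "P E x W E' \<longleftrightarrow> x \<in> B - E \<and> x \<noteq> 0 \<and> open W \<and> 0 \<in> W \<and>
      (\<forall>y\<in>cyclic x. \<forall>t\<in>W. y + t \<in> W \<longrightarrow> y = 0) \<and>
      finite E' \<and> insert x E \<subseteq> E' \<and> gen_subgroup (B - E') \<subseteq> W" for E x W E'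
  have "\<exists>x W E'. P E x W E'" if fin: "finite E" for E
  proof -
    obtain x W E' where "x \<in> B - E" "x \<noteq> 0" "open W" "0 \<in> W"
      "\<And>y t. y \<in> cyclic x \<Longrightarrow> t \<in> W \<Longrightarrow> y + t \<in> W \<Longrightarrow> y = 0"
      "finite E'" "insert x E \<subseteq> E'" "gen_subgroup (B - E') \<subseteq> W"
      using exists_separated_element[OF disc \<open>infinite B\<close> acs fin] by blast
    then have "P E x W E'"
      unfolding P_def by blast
    then show ?thesis
      by blast
  qed
  then obtain nx nW nE where step: "\<And>E. finite E \<Longrightarrow> P E (nx E) (nW E) (nE E)"
    by metis
  define E where "E = rec_nat {} (\<lambda>_. nE)"
  have E_Suc: "E (Suc n) = nE (E n)" for n
    by (simp add: E_def)
  have finite_E: "finite (E n)" for n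
  proof (induction n)
    case 0
    then show ?case
      by (simp add: E_def)
  next
    case (Suc n)
    then show ?case
      using step[OF Suc] by (simp add: E_Suc P_def)
  qed
  define a where "a n = nx (E n)" for n
  have P: "P (E n) (a n) (nW (E n)) (E (Suc n))" for n
    using step[OF finite_E] by (simp add: a_def E_Suc)
  interpret separating_sequence B E a "\<lambda>n. nW (E n)"
    by unfold_locales (use P in \<open>simp add: P_def; blast\<close>)+
  have "infinite (range a)"
    using inj_a by (rule range_inj_infinite)
  moreover have "0 \<notin> range a"
    using a_nonzero by auto
  ultimately show ?thesis
    using contains_copy_of_SA_range[OF disc acs] by blast
qed

theorem corollary5p6:
  assumes "\<forall>a::'a::{ab_group_add, topological_group_add, t2_space}. discrete_subspace (cyclic a)"
  shows "(\<exists>B::'a set. infinite B \<and> abs_cauchy_summable B) \<longleftrightarrow>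
         (\<exists>A::'a set. infinite A \<and> 0 \<notin> A \<and> contains_copy_of_SA A)"
  using ex_contains_copy_of_SA_if_abs_cauchy_summable[OF assms]
    ex_infinite_abs_cauchy_summable_if_contains_copy_of_SA
  by blast

end
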